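(* Let $N\ge1$, $n=\sum_{\nu=1}^N n_\nu$, $m\ge1$. For $\nu=1,\dots,N$ let $Q_\nu\in\mathbb{R}^{n_\nu\times n_\nu}$ be symmetric positive definite, $c_\nu\in\mathbb{R}^{n_\nu}$, and $X_\nu\subseteq\mathbb{R}^{n_\nu}$ nonempty, convex and closed; let $X=X_1\times\dots\times X_N$. Let $a\in\mathbb{R}^m$, $a\ge0$, $Q_y\in\mathbb{R}^{m\times m}$ positive definite diagonal, and $b,l:\mathbb{R}^n\to\mathbb{R}^m$ differentiable. Define $$\varphi(x)=\sum_{i=1}^m a_i\max\{(Q_y^{-1}b(x))_i,\,l_i(x)\},\qquad \Theta(x)=\sum_{\nu=1}^N\Big[\tfrac12 x_\nu^\top Q_\nu x_\nu+c_\nu^\top x_\nu\Big]+\varphi(x).$$ Assume there exist $\rho\ge0$ and $\omega_1,\omega_2\in\mathbb{R}$ such that for all $x\in X$ with $\|x\|>\rho$, $$\min\{0,\varphi(x)\}\ge\omega_1\|x\|+\omega_2.$$ Then $\Theta$ is coercive on $X$, i.e. $\Theta(x)\to\infty$ as $\|x\|\to\infty$ with $x\in X$.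
   Context: Here $x=(x_1,\dots,x_N)$ with $x_\nu\in\mathbb{R}^{n_\nu}$; the maxima are componentwise. *)

theory Defs
  imports "HOL-Analysis.Analysis"
begin

text \<open>Players are indexed by a finite type 'p (N = CARD('p) \<ge> 1), coordinates of
  R^n by a finite type 'n; blk i is the player owning coordinate i. The block space
  R^{n_nu} is embedded in R^n as the coordinate subspace of vectors vanishing
  outside block nu.\<close>

definition block_space :: "('n::finite \<Rightarrow> 'p) \<Rightarrow> 'p \<Rightarrow> (real^'n) set" where
  "block_space blk \<nu> = {z. \<forall>i. blk i \<noteq> \<nu> \<longrightarrow> z $ i = 0}"

definition proj :: "('n::finite \<Rightarrow> 'p) \<Rightarrow> 'p \<Rightarrow> real^'n \<Rightarrow> real^'n" where
  "proj blk \<nu> x = (\<chi> i. if blk i = \<nu> then x $ i else 0)"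

definition phi :: "real^'m::finite \<Rightarrow> real^'m^'m \<Rightarrow> (real^'n \<Rightarrow> real^'m)
    \<Rightarrow> (real^'n \<Rightarrow> real^'m) \<Rightarrow> real^'n \<Rightarrow> real" where
  "phi a Qy b l x = (\<Sum>i\<in>UNIV. a $ i * max ((matrix_inv Qy *v b x) $ i) (l x $ i))"

definition Theta :: "('n::finite \<Rightarrow> 'p::finite) \<Rightarrow> ('p \<Rightarrow> real^'n^'n) \<Rightarrow> ('p \<Rightarrow> real^'n)
    \<Rightarrow> real^'m::finite \<Rightarrow> real^'m^'m \<Rightarrow> (real^'n \<Rightarrow> real^'m)
    \<Rightarrow> (real^'n \<Rightarrow> real^'m) \<Rightarrow> real^'n \<Rightarrow> real" where
  "Theta blk Q c a Qy b l x =
     (\<Sum>\<nu>\<in>UNIV. (1/2) * (proj blk \<nu> x \<bullet> (Q \<nu> *v proj blk \<nu> x)) + c \<nu> \<bullet> proj blk \<nu> x)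
     + phi a Qy b l x"

end

theory Submission
  imports Defs "HOL-Real_Asymp.Real_Asymp"
begin

text \<open>The quadratic part of \<open>\<Theta>\<close> is a positive definite form on \<open>\<real>\<^sup>n\<close>, hence bounded
  below by \<open>\<mu> \<parallel>x\<parallel>\<^sup>2\<close> with \<open>\<mu> > 0\<close> (its minimum on the unit sphere); the linear part is
  bounded below by \<open>-C \<parallel>x\<parallel>\<close>, and the growth hypothesis bounds \<open>\<phi>\<close> below by
  \<open>\<omega>\<^sub>1 \<parallel>x\<parallel> + \<omega>\<^sub>2\<close> far out in \<open>X\<close>. So \<open>\<Theta>\<close> dominates a quadratic polynomial in \<open>\<parallel>x\<parallel>\<close> with
  positive leading coefficient.\<close>

lemma coercive_if_minorant:
  fixes f :: "'a::real_normed_vector \<Rightarrow> real"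
  assumes g: "filterlim g at_top at_top"
    and minorant: "\<And>x. P x \<Longrightarrow> norm x > \<rho> \<Longrightarrow> g (norm x) \<le> f x"
  shows "\<forall>M. \<exists>R. \<forall>x. P x \<longrightarrow> norm x > R \<longrightarrow> f x > M"
proof
  fix M :: real
  from g have "eventually (\<lambda>r. g r > M) at_top"
    by (simp add: filterlim_at_top_dense)
  then obtain R0 where R0: "\<And>r. r \<ge> R0 \<Longrightarrow> g r > M"
    by (auto simp: eventually_at_top_linorder)
  have "f x > M" if "P x" and "norm x > max \<rho> R0" for x
    using minorant[OF \<open>P x\<close>] R0[of "norm x"] that(2) by fastforce
  then show "\<exists>R. \<forall>x. P x \<longrightarrow> norm x > R \<longrightarrow> f x > M"
    by blast
qed

lemma quadratic_ge_sq_norm: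
  fixes q :: "'a::euclidean_space \<Rightarrow> real"
  assumes cont: "continuous_on UNIV q"
    and hom: "\<And>t x. q (t *\<^sub>R x) = t\<^sup>2 * q x"
    and pos: "\<And>x. x \<noteq> 0 \<Longrightarrow> q x > 0"
  obtains \<mu> where "\<mu> > 0" and "\<And>x. \<mu> * (norm x)\<^sup>2 \<le> q x"
proof -
  have "sphere (0::'a) 1 \<noteq> {}"
    by simp
  then obtain u where u: "u \<in> sphere 0 1" and u_min: "\<And>y. y \<in> sphere 0 1 \<Longrightarrow> q u \<le> q y"
    using continuous_attains_inf[of "sphere 0 1" q] continuous_on_subset[OF cont] by auto
  have "q x \<ge> q u * (norm x)\<^sup>2" for x
  proof (cases "x = 0")
    case True
    then show ?thesis using hom[of 0 x] by simp
  next
    case False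
    have "q ((1 / norm x) *\<^sub>R x) \<ge> q u"
      using False by (intro u_min) simp
    moreover have "q x = (norm x)\<^sup>2 * q ((1 / norm x) *\<^sub>R x)"
      using hom[of "norm x" "(1 / norm x) *\<^sub>R x"] False by simp
    ultimately show ?thesis
      by (metis mult.commute mult_left_mono zero_le_power2)
  qed
  moreover have "q u > 0"
    using u by (intro pos) auto
  ultimately show thesis
    using that by (simp add: mult.commute)
qed

lemma linear_proj: "linear (proj blk \<nu>)"
  unfolding linear_iff proj_def by (auto simp: vec_eq_iff)

lemma proj_in_block_space: "proj blk \<nu> x \<in> block_space blk \<nu>"
  unfolding proj_def block_space_def by auto

lemma norm_proj_le: "norm (proj blk \<nu> x) \<le> norm x"
proof -
  have "proj blk \<nu> x \<bullet> proj blk \<nu> x \<le> x \<bullet> x"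
    unfolding inner_vec_def proj_def by (intro sum_mono) auto
  then show ?thesis
    by (simp add: norm_le)
qed

definition block_quadratic_form ::
    "('n::finite \<Rightarrow> 'p::finite) \<Rightarrow> ('p \<Rightarrow> real^'n^'n) \<Rightarrow> real^'n \<Rightarrow> real" where
  "block_quadratic_form blk Q x = (\<Sum>\<nu>\<in>UNIV. proj blk \<nu> x \<bullet> (Q \<nu> *v proj blk \<nu> x))"

lemma Theta_eq:
  "Theta blk Q c a Qy b l x =
     block_quadratic_form blk Q x / 2 + (\<Sum>\<nu>\<in>UNIV. c \<nu> \<bullet> proj blk \<nu> x) + phi a Qy b l x"
  unfolding Theta_def block_quadratic_form_def
  by (simp add: sum.distrib sum_divide_distrib)

lemma continuous_on_block_quadratic_form: "continuous_on S (block_quadratic_form blk Q)"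
proof -
  have "continuous_on S (proj blk \<nu>)" for \<nu>
    using linear_proj[of blk \<nu>] by (simp add: linear_continuous_on linear_conv_bounded_linear)
  then show ?thesis
    unfolding block_quadratic_form_def
    by (intro continuous_intros continuous_on_compose2[OF matrix_vector_mult_linear_continuous_on])
      auto
qed

lemma block_quadratic_form_scaleR:
  "block_quadratic_form blk Q (t *\<^sub>R x) = t\<^sup>2 * block_quadratic_form blk Q x"
  unfolding block_quadratic_form_def linear_scale[OF linear_proj]
  by (simp add: matrix_vector_mult_scaleR power2_eq_square sum_distrib_left mult.assoc)

lemma block_quadratic_form_pos:
  assumes pd: "\<And>\<nu> z. z \<in> block_space blk \<nu> \<Longrightarrow> z \<noteq> 0 \<Longrightarrow> z \<bullet> (Q \<nu> *v z) > 0"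
    and "x \<noteq> 0"
  shows "block_quadratic_form blk Q x > 0"
proof -
  have nonneg: "proj blk \<nu> x \<bullet> (Q \<nu> *v proj blk \<nu> x) \<ge> 0" for \<nu>
    using pd[OF proj_in_block_space] by (cases "proj blk \<nu> x = 0") (auto intro: less_imp_le)
  obtain i where "x $ i \<noteq> 0"
    using \<open>x \<noteq> 0\<close> by (metis vec_eq_iff zero_index)
  then have "proj blk (blk i) x \<noteq> 0"
    by (auto simp: proj_def vec_eq_iff)
  then have "proj blk (blk i) x \<bullet> (Q (blk i) *v proj blk (blk i) x) > 0"
    by (rule pd[OF proj_in_block_space])
  then show ?thesis
    unfolding block_quadratic_form_def by (intro sum_pos2[where i="blk i"]) (auto intro: nonneg)
qed

lemma sum_inner_proj_ge:
  "(\<Sum>\<nu>\<in>UNIV. c \<nu> \<bullet> proj blk \<nu> x) \<ge> - (\<Sum>\<nu>\<in>UNIV. norm (c \<nu>)) * norm x"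
proof -
  have "c \<nu> \<bullet> proj blk \<nu> x \<ge> - (norm (c \<nu>) * norm x)" for \<nu>
  proof -
    have "\<bar>c \<nu> \<bullet> proj blk \<nu> x\<bar> \<le> norm (c \<nu>) * norm (proj blk \<nu> x)"
      by (rule Cauchy_Schwarz_ineq2)
    also have "\<dots> \<le> norm (c \<nu>) * norm x"
      by (intro mult_left_mono norm_proj_le) auto
    finally show ?thesis
      by linarith
  qed
  then have "(\<Sum>\<nu>\<in>UNIV. c \<nu> \<bullet> proj blk \<nu> x) \<ge> (\<Sum>\<nu>\<in>UNIV. - (norm (c \<nu>) * norm x))"
    by (intro sum_mono)
  then show ?thesis
    by (simp add: sum_distrib_right sum_negf)
qed

theorem mainTheorem3:
  fixes blk :: "'n::finite \<Rightarrow> 'p::finite"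
    and Q :: "'p \<Rightarrow> real^'n^'n" and c :: "'p \<Rightarrow> real^'n"
    and XX :: "'p \<Rightarrow> (real^'n) set"
    and a :: "real^'m::finite" and Qy :: "real^'m^'m"
    and b l :: "real^'n \<Rightarrow> real^'m"
  assumes Q_block: "\<And>\<nu> i j. blk i \<noteq> \<nu> \<or> blk j \<noteq> \<nu> \<Longrightarrow> Q \<nu> $ i $ j = 0"
    and Q_sym: "\<And>\<nu>. transpose (Q \<nu>) = Q \<nu>"
    and Q_pd: "\<And>\<nu> z. z \<in> block_space blk \<nu> \<Longrightarrow> z \<noteq> 0 \<Longrightarrow> z \<bullet> (Q \<nu> *v z) > 0"
    and c_block: "\<And>\<nu>. c \<nu> \<in> block_space blk \<nu>"
    and X_sub: "\<And>\<nu>. XX \<nu> \<subseteq> block_space blk \<nu>"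
    and X_ne: "\<And>\<nu>. XX \<nu> \<noteq> {}"
    and X_convex: "\<And>\<nu>. convex (XX \<nu>)"
    and X_closed: "\<And>\<nu>. closed (XX \<nu>)"
    and a_nonneg: "\<And>i. a $ i \<ge> 0"
    and Qy_diag: "\<And>i j. i \<noteq> j \<Longrightarrow> Qy $ i $ j = 0"
    and Qy_pos: "\<And>i. Qy $ i $ i > 0"
    and b_diff: "\<And>x. b differentiable (at x)"
    and l_diff: "\<And>x. l differentiable (at x)"
    and growth: "\<exists>\<rho>\<ge>0. \<exists>\<omega>1 \<omega>2. \<forall>x. (\<forall>\<nu>. proj blk \<nu> x \<in> XX \<nu>) \<longrightarrow> norm x > \<rho> \<longrightarrow>
                   min 0 (phi a Qy b l x) \<ge> \<omega>1 * norm x + \<omega>2"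
  shows "\<forall>M. \<exists>R. \<forall>x. (\<forall>\<nu>. proj blk \<nu> x \<in> XX \<nu>) \<longrightarrow> norm x > R \<longrightarrow>
           Theta blk Q c a Qy b l x > M"
proof -
  obtain \<rho> \<omega>1 \<omega>2 where growth': "\<And>x. (\<forall>\<nu>. proj blk \<nu> x \<in> XX \<nu>) \<Longrightarrow> norm x > \<rho> \<Longrightarrow>
      \<omega>1 * norm x + \<omega>2 \<le> phi a Qy b l x"
    using growth by fastforce
  have "block_quadratic_form blk Q x > 0" if "x \<noteq> 0" for x
    using Q_pd that by (rule block_quadratic_form_pos)
  then obtain \<mu> where "\<mu> > 0" and quadratic: "\<And>x. \<mu> * (norm x)\<^sup>2 \<le> block_quadratic_form blk Q x"
    using quadratic_ge_sq_norm continuous_on_block_quadratic_form block_quadratic_form_scaleR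
    by blast
  define C where "C = (\<Sum>\<nu>\<in>UNIV. norm (c \<nu>))"
  let ?g = "\<lambda>r. \<mu> / 2 * r\<^sup>2 - C * r + (\<omega>1 * r + \<omega>2)"
  have "filterlim ?g at_top at_top"
    using \<open>\<mu> > 0\<close> by real_asymp
  moreover have "?g (norm x) \<le> Theta blk Q c a Qy b l x"
    if "\<forall>\<nu>. proj blk \<nu> x \<in> XX \<nu>" and "norm x > \<rho>" for x
    using quadratic[of x] sum_inner_proj_ge[where c=c and blk=blk and x=x] growth'[OF that]
    unfolding Theta_eq C_def by linarith
  ultimately show ?thesis
    by (rule coercive_if_minorant)
qed

end
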